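(* Let $\mathbb{F}_q$ be a finite field, $\mathcal{C}\subseteq\mathbb{F}_q^n$ a linear $[n,k]$ code with dual code $\mathcal{C}^\perp$, and $\mathbb{P}$ a poset on $[n]=\{1,\dots,n\}$ with dual poset $\widetilde{\mathbb{P}}$. For $1\le r\le k$, $$d_r^{\mathbb{P}}(\mathcal{C})=\min\{|\langle J\rangle_{\mathbb{P}}| : J\subseteq[n],\ |J|-\rho^\perp(J)\ge r\}=\min\{|\langle J\rangle_{\mathbb{P}}| : J\subseteq[n],\ |J|-\rho^\perp(J)= r\}.$$ For $1\le s\le n-k$, $$d_s^{\widetilde{\mathbb{P}}}(\mathcal{C}^\perp)=\min\{|\langle J\rangle_{\widetilde{\mathbb{P}}}| : J\subseteq[n],\ |J|-\rho(J)\ge s\}=\min\{|\langle J\rangle_{\widetilde{\mathbb{P}}}| : J\subseteq[n],\ |J|-\rho(J)= s\}.$$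
   Context: The dual poset $\widetilde{\mathbb{P}}$ has $i\le_{\widetilde{\mathbb{P}}}j$ iff $j\le_{\mathbb{P}}i$. For $J\subseteq[n]$, $\langle J\rangle_{\mathbb{P}}=\{i:i\le_{\mathbb{P}}j\text{ for some }j\in J\}$ (the smallest ideal of $\mathbb{P}$ containing $J$), and similarly for $\widetilde{\mathbb{P}}$. For $u\in\mathbb{F}_q^n$, $\mathrm{supp}(u)=\{i:u_i\ne0\}$; for $D\subseteq\mathbb{F}_q^n$, $\mathrm{supp}(D)=\bigcup_{u\in D}\mathrm{supp}(u)$ and $w_{\mathbb{P}}(D)=|\langle\mathrm{supp}(D)\rangle_{\mathbb{P}}|$. The $r$-th generalized minimum $\mathbb{P}$-weight is $d_r^{\mathbb{P}}(\mathcal{C})=\min\{w_{\mathbb{P}}(D): D \text{ an } r\text{-dimensional subspace of }\mathcal{C}\}$, and $d_s^{\widetilde{\mathbb{P}}}(\mathcal{C}^\perp)=\min\{w_{\widetilde{\mathbb{P}}}(D): D \text{ an } s\text{-dimensional subspace of }\mathcal{C}^\perp\}$. For $A\subseteq[n]$, $\mathcal{C}|A=\{(u_i)_{i\in A}:u\in\mathcal{C}\}$; $\rho(A)=\dim(\mathcal{C}|A)$ and $\rho^\perp(A)=\dim(\mathcal{C}^\perp|A)$ are the rank and corank functions of the matroid of $\mathcal{C}$. *)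

theory Defs
  imports "HOL-Analysis.Analysis"
begin

text \<open>Coordinates are indexed by a finite type 'n, playing the role of [n]
 (so n = CARD('n)). Vectors of F_q^n are elements of 'a^'n for a finite field 'a.\<close>

definition is_poset :: "('n \<Rightarrow> 'n \<Rightarrow> bool) \<Rightarrow> bool" where
  "is_poset le \<longleftrightarrow> reflp le \<and> transp le \<and> antisymp le"

definition dual_poset :: "('n \<Rightarrow> 'n \<Rightarrow> bool) \<Rightarrow> ('n \<Rightarrow> 'n \<Rightarrow> bool)" where
  "dual_poset le = (\<lambda>i j. le j i)"

definition ideal_of :: "('n \<Rightarrow> 'n \<Rightarrow> bool) \<Rightarrow> 'n set \<Rightarrow> 'n set" where
  "ideal_of le J = {i. \<exists>j\<in>J. le i j}"

definition supp :: "'a::zero ^ 'n \<Rightarrow> 'n set" where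
  "supp u = {i. u $ i \<noteq> 0}"

definition supp_set :: "('a::zero ^ 'n) set \<Rightarrow> 'n set" where
  "supp_set D = (\<Union>u\<in>D. supp u)"

definition poset_weight :: "('n \<Rightarrow> 'n \<Rightarrow> bool) \<Rightarrow> ('a::zero ^ 'n) set \<Rightarrow> nat" where
  "poset_weight le D = card (ideal_of le (supp_set D))"

definition dual_code :: "('a::field ^ 'n) set \<Rightarrow> ('a ^ 'n) set" where
  "dual_code C = {v. \<forall>u\<in>C. (\<Sum>i\<in>UNIV. u $ i * v $ i) = 0}"

definition gen_weight :: "('n::finite \<Rightarrow> 'n \<Rightarrow> bool) \<Rightarrow> ('a::field ^ 'n) set \<Rightarrow> nat \<Rightarrow> nat" where
  "gen_weight le C r = Min {poset_weight le D | D. vec.subspace D \<and> D \<subseteq> C \<and> vec.dim D = r}"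

text \<open>Restriction C|A, realised as the projection that zeroes the coordinates outside A
 (a linear isomorphic copy of the punctured code, hence of the same dimension).\<close>
definition restrict_code :: "('a::field ^ 'n) set \<Rightarrow> 'n set \<Rightarrow> ('a ^ 'n) set" where
  "restrict_code C A = (\<lambda>u. \<chi> i. if i \<in> A then u $ i else 0) ` C"

definition code_rank :: "('a::field ^ 'n::finite) set \<Rightarrow> 'n set \<Rightarrow> nat" where
  "code_rank C A = vec.dim (restrict_code C A)"

end

theory Submission
  imports Defs
begin

text \<open>
  For \<open>J \<subseteq> [n]\<close> let \<open>C(J)\<close> be the subcode of codewords supported in \<open>J\<close>. Viewed in
  \<open>\<FF>\<^sub>q\<^sup>J\<close>, \<open>C(J)\<close> is the dual of the punctured code \<open>C\<^sup>\<perp>|J\<close>, so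
  \<open>dim C(J) = |J| - \<rho>\<^sup>\<perp>(J)\<close>. An \<open>r\<close>-dimensional subcode \<open>D\<close> lies in \<open>C(supp D)\<close>,
  and conversely \<open>C(J)\<close> contains an \<open>r\<close>-dimensional subcode supported in \<open>J\<close> as soon as
  \<open>dim C(J) \<ge> r\<close>; since the ideal generated by \<open>J\<close> grows with \<open>J\<close>, the minima agree.
  The condition \<open>dim C(J) \<ge> r\<close> can be sharpened to \<open>= r\<close> because deleting one coordinate
  from \<open>J\<close> lowers \<open>dim C(J)\<close> by at most one. The statement for \<open>C\<^sup>\<perp>\<close> is the same
  result for the dual code and the dual poset, using \<open>C\<^sup>\<perp>\<^sup>\<perp> = C\<close>.
\<close>

section \<open>Linear algebra over an arbitrary field\<close>

lemma dim_rows_le_dim_columns_field: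
  fixes A :: "'a::field^'n^'m"
  shows "vec.dim (rows A) \<le> vec.dim (columns A)"
proof -
  obtain B where B: "B \<subseteq> columns A" "vec.independent B" "columns A \<subseteq> vec.span B"
      "card B = vec.dim (columns A)" by (rule vec.basis_exists)
  have fin: "finite B" using B(2) vec.finiteI_independent by blast
  define coeffs where "coeffs b = (\<chi> j. vec.representation B (column j A) b)" for b
  have row_expansion: "A $ i = (\<Sum>b\<in>B. (b $ i) *s coeffs b)" for i
  proof -
    have "A $ i $ j = (\<Sum>b\<in>B. b $ i * vec.representation B (column j A) b)" for j
    proof -
      have "column j A \<in> vec.span B" using B(3) unfolding columns_def by blast
      then have "(\<Sum>b\<in>B. vec.representation B (column j A) b *s b) = column j A"
        using vec.sum_representation_eq[OF B(2) _ fin] by simp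
      then have "(\<Sum>b\<in>B. vec.representation B (column j A) b *s b) $ i = A $ i $ j"
        by (simp add: column_def)
      then show ?thesis by (simp add: sum_component mult.commute)
    qed
    then show ?thesis by (simp add: vec_eq_iff sum_component coeffs_def)
  qed
  have "rows A \<subseteq> vec.span (coeffs ` B)"
  proof
    fix x assume "x \<in> rows A"
    then obtain i where i: "x = A $ i" by (auto simp: rows_def row_def)
    show "x \<in> vec.span (coeffs ` B)" unfolding i row_expansion
      by (intro vec.span_sum vec.span_scale vec.span_base) auto
  qed
  then have "vec.dim (rows A) \<le> card (coeffs ` B)" using fin by (intro vec.dim_le_card) auto
  also have "\<dots> \<le> card B" using fin card_image_le by blast
  finally show ?thesis using B(4) by simp
qed

lemma dim_rows_eq_dim_columns_field:
  fixes A :: "'a::field^'n^'m"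
  shows "vec.dim (rows A) = vec.dim (columns A)"
  using dim_rows_le_dim_columns_field[of A] dim_rows_le_dim_columns_field[of "transpose A"]
  by simp

lemma matrix_vector_mult_axis: "(A::'a::field^'n^'m) *v axis j 1 = column j A"
  by (simp add: matrix_vector_mult_def column_def vec_eq_iff axis_def if_distrib sum.If_cases
      cong del: if_weak_cong)

lemma dim_range_matrix_vector_mult:
  fixes A :: "'a::field^'n^'m"
  shows "vec.dim (range ((*v) A)) = vec.dim (columns A)"
proof (rule antisym)
  show "vec.dim (range ((*v) A)) \<le> vec.dim (columns A)"
    by (rule vec.dim_mono) (auto intro: matrix_vector_mult_in_columnspace_gen)
  show "vec.dim (columns A) \<le> vec.dim (range ((*v) A))"
    by (rule vec.dim_subset) (auto simp: columns_def matrix_vector_mult_axis[symmetric])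
qed

lemma dim_kernel_plus_dim_range:
  fixes f :: "'a::field^'n \<Rightarrow> 'a^'m"
  assumes lin: "Vector_Spaces.linear (*s) (*s) f"
  shows "vec.dim {x. f x = 0} + vec.dim (range f) = CARD('n)"
proof -
  interpret f: Vector_Spaces.linear "(*s)" "(*s)" f by fact
  obtain K where K: "K \<subseteq> {x. f x = 0}" "vec.independent K" "{x. f x = 0} \<subseteq> vec.span K"
      "card K = vec.dim {x. f x = 0}" by (rule vec.basis_exists)
  obtain B where B: "K \<subseteq> B" "vec.independent B" "UNIV \<subseteq> vec.span B"
    using vec.maximal_independent_subset_extend[of K UNIV] K(2) by (metis subset_UNIV)
  have fin: "finite B" using B(2) vec.finiteI_independent by blast
  have card_B: "card B = CARD('n)"
    using vec.basis_card_eq_dim[of B UNIV] B vec_dim_card by auto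
  define E where "E = B - K"
  have indep_E: "vec.independent E" using B(2) vec.independent_mono E_def by blast
  have card_E: "card E = card B - card K" "card K \<le> card B"
    unfolding E_def using B(1) fin by (auto simp: card_Diff_subset finite_subset card_mono)
  have sums: "{x + y |x y. x \<in> vec.span K \<and> y \<in> vec.span E} = UNIV"
    using vec.span_Un[of K E] B(1,3) E_def by (auto simp: Un_absorb1)
  have "vec.dim {x + y |x y. x \<in> vec.span K \<and> y \<in> vec.span E}
      + vec.dim (vec.span K \<inter> vec.span E) = vec.dim (vec.span K) + vec.dim (vec.span E)"
    by (rule vec.dim_sums_Int) auto
  moreover have "vec.dim (vec.span K) = card K" "vec.dim (vec.span E) = card E"
    using K(2) indep_E vec.dim_span_eq_card_independent by blast+
  ultimately have "vec.dim (vec.span K \<inter> vec.span E) = 0"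
    using sums card_B card_E vec_dim_card[where 'a='a and 'n='n] by simp
  then have trivial_int: "vec.span K \<inter> vec.span E \<subseteq> {0}" by simp
  have kernel_span_K: "f x = 0" if "x \<in> vec.span K" for x
    using f.eq_0_on_span[OF _ that] K(1) by auto
  have inj: "inj_on f (vec.span E)"
    using K(3) trivial_int by (subst f.inj_on_iff_eq_0) auto
  have "range f \<subseteq> f ` vec.span E"
  proof
    fix z assume "z \<in> range f"
    then obtain x where "z = f x" by blast
    moreover obtain a b where "x = a + b" "a \<in> vec.span K" "b \<in> vec.span E"
      using sums by blast
    ultimately have "z = f (a + b)" "a \<in> vec.span K" "b \<in> vec.span E" by simp_all
    then show "z \<in> f ` vec.span E" using kernel_span_K f.add by simp
  qed
  then have "range f = f ` vec.span E" by blast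
  then have "vec.dim (range f) = card E"
    using vec.dim_image_eq[OF lin, of "vec.span E"] inj indep_E
    by (simp add: vec.span_span vec.dim_eq_card_independent)
  then show ?thesis using K(4) card_E card_B by simp
qed

section \<open>The dual code\<close>

lemma subspace_dual_code: "vec.subspace (dual_code (W :: ('a::field ^ 'n::finite) set))"
proof (rule vec.subspaceI)
  fix c x assume "x \<in> dual_code W"
  moreover have "(\<Sum>i\<in>UNIV. u $ i * (c * x $ i)) = c * (\<Sum>i\<in>UNIV. u $ i * x $ i)"
    for u :: "'a^'n" by (simp add: sum_distrib_left mult.left_commute)
  ultimately show "c *s x \<in> dual_code W" by (simp add: dual_code_def)
qed (auto simp: dual_code_def distrib_left sum.distrib)

lemma subset_dual_code_dual_code: "W \<subseteq> dual_code (dual_code W)"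
  by (auto simp: dual_code_def mult.commute)

lemma dim_dual_code:
  fixes W :: "('a::{finite,field} ^ 'n::finite) set"
  assumes W: "vec.subspace W"
  shows "vec.dim (dual_code W) + vec.dim W = CARD('n)"
proof -
  \<comment> \<open>rows indexed by all of \<open>'a^'n\<close> (hence the finite field): row \<open>v\<close> is \<open>v\<close> if \<open>v \<in> W\<close>, else 0\<close>
  define A :: "'a^'n^('a^'n)" where "A = (\<chi> v. if v \<in> W then v else 0)"
  have "dual_code W = {x. A *v x = 0}"
    by (auto simp: dual_code_def A_def vec_eq_iff matrix_vector_mult_def)
  moreover have "rows A = W"
  proof
    show "rows A \<subseteq> W" using vec.subspace_0[OF W] by (auto simp: rows_def row_def A_def)
    show "W \<subseteq> rows A"
      by (auto simp: rows_def row_def A_def vec_eq_iff intro!: exI)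
  qed
  ultimately show ?thesis
    using dim_kernel_plus_dim_range[OF matrix_vector_mul_linear_gen, of A]
      dim_range_matrix_vector_mult[of A] dim_rows_eq_dim_columns_field[of A]
    by simp
qed

lemma dual_code_dual_code:
  fixes W :: "('a::{finite,field} ^ 'n::finite) set"
  assumes W: "vec.subspace W"
  shows "dual_code (dual_code W) = W"
proof -
  have "vec.dim (dual_code (dual_code W)) \<le> vec.dim W"
    using dim_dual_code[OF subspace_dual_code, of W] dim_dual_code[OF W] by simp
  then show ?thesis
    using vec.subspace_dim_equal[OF W subspace_dual_code subset_dual_code_dual_code] by simp
qed

section \<open>Coordinate subspaces and supported subcodes\<close>

definition coord_subspace :: "'n set \<Rightarrow> ('a::zero^'n) set" where
  "coord_subspace J = {x. \<forall>i. i \<notin> J \<longrightarrow> x $ i = 0}"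

definition coord_proj :: "'n set \<Rightarrow> 'a::zero^'n \<Rightarrow> 'a^'n" where
  "coord_proj J x = (\<chi> i. if i \<in> J then x $ i else 0)"

definition supported_subcode :: "('a::zero^'n) set \<Rightarrow> 'n set \<Rightarrow> ('a^'n) set" where
  "supported_subcode C J = {u\<in>C. supp u \<subseteq> J}"

lemma restrict_code_eq_image_coord_proj: "restrict_code C J = coord_proj J ` C"
  by (simp add: restrict_code_def coord_proj_def[abs_def])

lemma supported_subcode_eq_inter: "supported_subcode C J = C \<inter> coord_subspace J"
  by (auto simp: supported_subcode_def coord_subspace_def supp_def)

lemma linear_coord_proj: "Vector_Spaces.linear (*s) (*s) (coord_proj J :: 'a::field^'n \<Rightarrow> _)"
  unfolding Vector_Spaces.linear_iff
  by (auto simp: coord_proj_def vec_eq_iff vec.vector_space_axioms)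

lemma subspace_coord_subspace: "vec.subspace (coord_subspace J :: ('a::field^'n) set)"
  by (rule vec.subspaceI) (auto simp: coord_subspace_def)

lemma dim_coord_subspace: "vec.dim (coord_subspace J :: ('a::field^'n::finite) set) = card J"
  unfolding coord_subspace_def by (rule dim_substandard_cart)

lemma coord_proj_in_coord_subspace: "coord_proj J x \<in> coord_subspace J"
  by (simp add: coord_proj_def coord_subspace_def)

lemma coord_proj_add_coord_proj_Compl:
  "coord_proj J x + coord_proj (- J) x = (x :: 'a::monoid_add^'n)"
  by (auto simp: coord_proj_def vec_eq_iff)

lemma dim_eq_dim_inter_coord_subspace_plus:
  fixes Q :: "('a::field^'n::finite) set"
  assumes Q: "vec.subspace Q" and Compl: "coord_subspace (- J) \<subseteq> Q"
    and proj: "\<And>x. x \<in> Q \<Longrightarrow> coord_proj J x \<in> Q"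
  shows "vec.dim Q = vec.dim (Q \<inter> coord_subspace J) + (CARD('n) - card J)"
proof -
  have sums: "{x + y |x y. x \<in> Q \<inter> coord_subspace J \<and> y \<in> coord_subspace (- J)} = Q"
  proof
    show "{x + y |x y. x \<in> Q \<inter> coord_subspace J \<and> y \<in> coord_subspace (- J)} \<subseteq> Q"
      using Compl by (auto intro: vec.subspace_add[OF Q])
    show "Q \<subseteq> {x + y |x y. x \<in> Q \<inter> coord_subspace J \<and> y \<in> coord_subspace (- J)}"
    proof
      fix x assume "x \<in> Q"
      then have "coord_proj J x \<in> Q \<inter> coord_subspace J"
        using proj coord_proj_in_coord_subspace by blast
      moreover have "coord_proj (- J) x \<in> coord_subspace (- J)"
        by (rule coord_proj_in_coord_subspace)
      ultimately show "x \<in> {x + y |x y. x \<in> Q \<inter> coord_subspace J \<and> y \<in> coord_subspace (- J)}"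
        using coord_proj_add_coord_proj_Compl[of J x] by force
    qed
  qed
  have "(Q \<inter> coord_subspace J) \<inter> coord_subspace (- J) \<subseteq> {0}"
    by (auto simp: coord_subspace_def vec_eq_iff) (metis ComplI)
  then have "vec.dim ((Q \<inter> coord_subspace J) \<inter> coord_subspace (- J)) = 0" by simp
  moreover have "vec.dim (coord_subspace (- J) :: ('a^'n) set) = CARD('n) - card J"
    using dim_coord_subspace[of "- J"] card_Diff_subset[of J UNIV]
    by (simp add: Compl_eq_Diff_UNIV)
  moreover have "vec.dim Q + vec.dim ((Q \<inter> coord_subspace J) \<inter> coord_subspace (- J))
      = vec.dim (Q \<inter> coord_subspace J) + vec.dim (coord_subspace (- J) :: ('a^'n) set)"
    using vec.dim_sums_Int[of "Q \<inter> coord_subspace J" "coord_subspace (- J)"] sums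
    by (simp add: vec.subspace_inter Q subspace_coord_subspace)
  ultimately show ?thesis by linarith
qed

lemma dim_dual_code_inter_coord_subspace:
  fixes P :: "('a::{finite,field}^'n::finite) set"
  assumes P: "vec.subspace P" and supported: "P \<subseteq> coord_subspace J"
  shows "vec.dim (dual_code P \<inter> coord_subspace J) = card J - vec.dim P"
proof -
  have "coord_subspace (- J) \<subseteq> dual_code P"
    using supported by (fastforce simp: dual_code_def coord_subspace_def intro: sum.neutral)
  moreover have "coord_proj J x \<in> dual_code P" if "x \<in> dual_code P" for x
  proof -
    have "(\<Sum>i\<in>UNIV. p $ i * coord_proj J x $ i) = (\<Sum>i\<in>UNIV. p $ i * x $ i)" if "p \<in> P" for p
      using supported that by (intro sum.cong) (auto simp: coord_subspace_def coord_proj_def)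
    then show ?thesis using \<open>x \<in> dual_code P\<close> by (simp add: dual_code_def)
  qed
  ultimately have "vec.dim (dual_code P)
      = vec.dim (dual_code P \<inter> coord_subspace J) + (CARD('n) - card J)"
    by (intro dim_eq_dim_inter_coord_subspace_plus subspace_dual_code)
  moreover have "vec.dim P \<le> card J"
    using vec.dim_subset[OF supported] by (simp add: dim_coord_subspace)
  moreover have "card J \<le> CARD('n)" by (simp add: card_mono)
  ultimately show ?thesis using dim_dual_code[OF P] by linarith
qed

lemma dual_code_image_coord_proj_inter:
  fixes C :: "('a::{finite,field}^'n::finite) set"
  assumes C: "vec.subspace C"
  shows "dual_code (coord_proj J ` dual_code C) \<inter> coord_subspace J = supported_subcode C J"
proof -
  have "(\<Sum>i\<in>UNIV. coord_proj J v $ i * u $ i) = (\<Sum>i\<in>UNIV. v $ i * u $ i)"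
    if "u \<in> coord_subspace J" for u v :: "'a^'n"
    using that by (intro sum.cong) (auto simp: coord_subspace_def coord_proj_def)
  then have "dual_code (coord_proj J ` dual_code C) \<inter> coord_subspace J
      = dual_code (dual_code C) \<inter> coord_subspace J"
    by (auto simp: dual_code_def)
  then show ?thesis by (simp add: dual_code_dual_code[OF C] supported_subcode_eq_inter)
qed

lemma card_minus_code_rank_dual_code:
  fixes C :: "('a::{finite,field}^'n::finite) set"
  assumes C: "vec.subspace C"
  shows "card J - code_rank (dual_code C) J = vec.dim (supported_subcode C J)"
proof -
  define P where "P = coord_proj J ` dual_code C"
  interpret coord_proj: Vector_Spaces.linear "(*s)" "(*s)" "coord_proj J :: 'a^'n \<Rightarrow> 'a^'n"
    by (rule linear_coord_proj)
  have "vec.subspace P" unfolding P_def by (rule coord_proj.subspace_image[OF subspace_dual_code])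
  moreover have "P \<subseteq> coord_subspace J" unfolding P_def using coord_proj_in_coord_subspace by blast
  moreover have "code_rank (dual_code C) J = vec.dim P"
    by (simp add: code_rank_def P_def restrict_code_eq_image_coord_proj)
  ultimately show ?thesis
    using dim_dual_code_inter_coord_subspace dual_code_image_coord_proj_inter[OF C]
    unfolding P_def by metis
qed

lemma dim_supported_subcode_le_Diff_singleton:
  fixes C :: "('a::field^'n::finite) set"
  assumes C: "vec.subspace C"
  shows "vec.dim (supported_subcode C J) \<le> vec.dim (supported_subcode C (J - {i})) + 1"
proof (cases "\<exists>w\<in>supported_subcode C J. w $ i \<noteq> 0")
  case False
  then have "supported_subcode C J \<subseteq> supported_subcode C (J - {i})"
    by (auto simp: supported_subcode_def supp_def)
  then have "vec.dim (supported_subcode C J) \<le> vec.dim (supported_subcode C (J - {i}))"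
    by (rule vec.dim_subset)
  then show ?thesis by simp
next
  case True
  then obtain w where w: "w \<in> supported_subcode C J" "w $ i \<noteq> 0" by blast
  let ?S = "vec.span (insert w (supported_subcode C (J - {i})))"
  have "u \<in> ?S" if u: "u \<in> supported_subcode C J" for u
  proof -
    \<comment> \<open>clearing coordinate \<open>i\<close> of \<open>u\<close> with the pivot \<open>w\<close>\<close>
    define v where "v = u - (u $ i / w $ i) *s w"
    have "v \<in> C"
      using u w(1) unfolding v_def supported_subcode_def
      by (blast intro: vec.subspace_diff[OF C] vec.subspace_scale[OF C])
    moreover have "v $ k = 0" if "k \<notin> J - {i}" for k
    proof (cases "k = i")
      case True
      then show ?thesis using w(2) by (simp add: v_def)
    next
      case False
      then have "k \<notin> J" using that by blast
      then have "u $ k = 0" "w $ k = 0"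
        using u w(1) by (auto simp: supported_subcode_def supp_def)
      then show ?thesis by (simp add: v_def)
    qed
    ultimately have "v \<in> ?S"
      by (auto simp: supported_subcode_def supp_def intro: vec.span_base)
    moreover have "(u $ i / w $ i) *s w \<in> ?S" by (simp add: vec.span_base vec.span_scale)
    ultimately have "v + (u $ i / w $ i) *s w \<in> ?S" by (rule vec.span_add)
    then show ?thesis by (simp add: v_def)
  qed
  then have "vec.dim (supported_subcode C J) \<le> vec.dim (insert w (supported_subcode C (J - {i})))"
    by (intro vec.dim_mono) blast
  also have "\<dots> \<le> vec.dim (supported_subcode C (J - {i})) + 1" by (simp add: vec.dim_insert)
  finally show ?thesis .
qed

section \<open>Generalized weights via supported subcodes\<close>

lemma exists_subset_with_value:
  fixes f :: "'b set \<Rightarrow> nat"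
  assumes "finite J0" and empty: "f {} = 0" and step: "\<And>J i. f J \<le> f (J - {i}) + 1"
    and "r \<le> f J0"
  shows "\<exists>J\<subseteq>J0. f J = r"
  using assms(1,4)
proof (induction J0 rule: finite_induct)
  case empty
  then show ?case using \<open>f {} = 0\<close> by auto
next
  case (insert i F)
  show ?case
  proof (cases "f (insert i F) = r")
    case False
    then have "r \<le> f F"
      using insert.prems insert.hyps(2) step[of "insert i F" i] by simp
    then show ?thesis using insert.IH by blast
  qed blast
qed

lemma exists_subspace_of_dim:
  fixes C :: "('a::field^'n::finite) set"
  assumes C: "vec.subspace C" and r: "r \<le> vec.dim C"
  shows "\<exists>D. vec.subspace D \<and> D \<subseteq> C \<and> vec.dim D = r"
proof -
  obtain B where B: "B \<subseteq> C" "vec.independent B" "C \<subseteq> vec.span B" "card B = vec.dim C"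
    by (rule vec.basis_exists)
  obtain B' where B': "B' \<subseteq> B" "card B' = r"
    using obtain_subset_with_card_n[of r B] r B(4) by auto
  show ?thesis
  proof (intro exI conjI)
    show "vec.subspace (vec.span B')" by simp
    show "vec.span B' \<subseteq> C" using B'(1) B(1) C vec.span_minimal by blast
    show "vec.dim (vec.span B') = r"
      using B'(2) vec.independent_mono[OF B(2) B'(1)] by (simp add: vec.dim_eq_card_independent)
  qed
qed

lemma card_ideal_of_mono: "J \<subseteq> J' \<Longrightarrow> card (ideal_of le J) \<le> card (ideal_of le (J' :: 'n::finite set))"
  by (rule card_mono) (auto simp: ideal_of_def)

lemma Min_eq_Min_if_mutually_bounded:
  fixes A B :: "'b::linorder set"
  assumes "finite A" "finite B" "A \<noteq> {}"
    and A_bounded: "\<And>a. a \<in> A \<Longrightarrow> \<exists>b\<in>B. b \<le> a"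
    and B_bounded: "\<And>b. b \<in> B \<Longrightarrow> \<exists>a\<in>A. a \<le> b"
  shows "Min A = Min B"
proof (rule antisym)
  obtain b where b: "b \<in> B" "b \<le> Min A" using A_bounded[OF Min_in[OF assms(1,3)]] by blast
  then have "B \<noteq> {}" by blast
  obtain a where a: "a \<in> A" "a \<le> Min B" using B_bounded[OF Min_in[OF assms(2) \<open>B \<noteq> {}\<close>]] by blast
  show "Min A \<le> Min B" using Min_le[OF assms(1) a(1)] a(2) by (rule order.trans)
  show "Min B \<le> Min A" using Min_le[OF assms(2) b(1)] b(2) by (rule order.trans)
qed

lemma exists_supported_subcode_dim_eq_card_ideal_le:
  fixes C :: "('a::field^'n::finite) set"
  assumes C: "vec.subspace C" and D: "D \<subseteq> C" "vec.dim D = r"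
  shows "\<exists>J. vec.dim (supported_subcode C J) = r \<and> card (ideal_of le J) \<le> poset_weight le D"
proof -
  have "D \<subseteq> supported_subcode C (supp_set D)"
    using D(1) by (auto simp: supported_subcode_def supp_set_def)
  then have "r \<le> vec.dim (supported_subcode C (supp_set D))"
    using D(2) by (metis vec.dim_subset)
  moreover have "vec.dim (supported_subcode C {}) = 0"
    by (auto simp: supported_subcode_def supp_def vec_eq_iff)
  ultimately obtain J where J: "J \<subseteq> supp_set D" "vec.dim (supported_subcode C J) = r"
    using exists_subset_with_value[where f = "\<lambda>J. vec.dim (supported_subcode C J)", OF finite]
      dim_supported_subcode_le_Diff_singleton[OF C] by blast
  moreover have "card (ideal_of le J) \<le> poset_weight le D"
    using card_ideal_of_mono[OF J(1)] by (simp add: poset_weight_def)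
  ultimately show ?thesis by blast
qed

lemma exists_subcode_poset_weight_le_card_ideal:
  fixes C :: "('a::field^'n::finite) set"
  assumes C: "vec.subspace C" and r: "r \<le> vec.dim (supported_subcode C J)"
  shows "\<exists>D. vec.subspace D \<and> D \<subseteq> C \<and> vec.dim D = r \<and> poset_weight le D \<le> card (ideal_of le J)"
proof -
  have "vec.subspace (supported_subcode C J)"
    unfolding supported_subcode_eq_inter by (rule vec.subspace_inter[OF C subspace_coord_subspace])
  then obtain D where D: "vec.subspace D" "D \<subseteq> supported_subcode C J" "vec.dim D = r"
    using exists_subspace_of_dim r by blast
  moreover have "D \<subseteq> C" using D(2) by (auto simp: supported_subcode_def)
  moreover have "supp_set D \<subseteq> J" using D(2) by (auto simp: supported_subcode_def supp_set_def)
  then have "poset_weight le D \<le> card (ideal_of le J)"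
    using card_ideal_of_mono by (simp add: poset_weight_def)
  ultimately show ?thesis by blast
qed

lemma gen_weight_eq_Min_supported_subcode:
  fixes C :: "('a::field^'n::finite) set" and le :: "'n \<Rightarrow> 'n \<Rightarrow> bool"
  assumes C: "vec.subspace C" and r: "r \<le> vec.dim C"
  shows "gen_weight le C r = Min {card (ideal_of le J) | J. vec.dim (supported_subcode C J) \<ge> r}"
    and "gen_weight le C r = Min {card (ideal_of le J) | J. vec.dim (supported_subcode C J) = r}"
proof -
  let ?weights = "{poset_weight le D | D. vec.subspace D \<and> D \<subseteq> C \<and> vec.dim D = r}"
  let ?ge = "{card (ideal_of le J) | J. vec.dim (supported_subcode C J) \<ge> r}"
  let ?eq = "{card (ideal_of le J) | J. vec.dim (supported_subcode C J) = r}"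
  have finite_ideal_cards: "finite {card (ideal_of le J) | J. P J}" for P
    by (rule finite_subset[of _ "range (\<lambda>J. card (ideal_of le J))"]) auto
  have finite_weights: "finite ?weights"
    by (rule finite_subset[of _ "range (\<lambda>J. card (ideal_of le J))"]) (auto simp: poset_weight_def)
  have nonempty: "?weights \<noteq> {}" using exists_subspace_of_dim[OF C r] by blast
  have weights_bounded: "\<exists>b\<in>?eq. b \<le> a" if "a \<in> ?weights" for a
  proof -
    obtain D where D: "a = poset_weight le D" "D \<subseteq> C" "vec.dim D = r"
      using \<open>a \<in> ?weights\<close> by blast
    then obtain J where "vec.dim (supported_subcode C J) = r" "card (ideal_of le J) \<le> a"
      using exists_supported_subcode_dim_eq_card_ideal_le[OF C D(2,3)] by blast
    then show ?thesis by blast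
  qed
  have ge_bounded: "\<exists>a\<in>?weights. a \<le> b" if "b \<in> ?ge" for b
  proof -
    obtain J where J: "b = card (ideal_of le J)" "r \<le> vec.dim (supported_subcode C J)"
      using \<open>b \<in> ?ge\<close> by blast
    then obtain D where "vec.subspace D" "D \<subseteq> C" "vec.dim D = r" "poset_weight le D \<le> b"
      using exists_subcode_poset_weight_le_card_ideal[OF C J(2)] by blast
    then show ?thesis by blast
  qed
  have "Min ?weights = Min ?ge"
  proof (rule Min_eq_Min_if_mutually_bounded[OF finite_weights finite_ideal_cards nonempty])
    show "\<exists>b\<in>?ge. b \<le> a" if "a \<in> ?weights" for a
      using weights_bounded[OF that] by fastforce
  qed (fact ge_bounded)
  moreover have "Min ?weights = Min ?eq"
  proof (rule Min_eq_Min_if_mutually_bounded[OF finite_weights finite_ideal_cards nonempty])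
    show "\<exists>a\<in>?weights. a \<le> b" if "b \<in> ?eq" for b
      using ge_bounded that by fastforce
  qed (fact weights_bounded)
  ultimately show "gen_weight le C r = Min ?ge" "gen_weight le C r = Min ?eq"
    unfolding gen_weight_def by simp_all
qed

theorem theorem2:
  fixes C :: "('a::{finite,field} ^ 'n::finite) set"
    and le :: "'n \<Rightarrow> 'n \<Rightarrow> bool"
  assumes "vec.subspace C"
    and "is_poset le"
  shows "(\<forall>r. 1 \<le> r \<and> r \<le> vec.dim C \<longrightarrow>
            gen_weight le C r
              = Min {card (ideal_of le J) | J. card J - code_rank (dual_code C) J \<ge> r}
          \<and> gen_weight le C r
              = Min {card (ideal_of le J) | J. card J - code_rank (dual_code C) J = r})
       \<and> (\<forall>s. 1 \<le> s \<and> s \<le> CARD('n) - vec.dim C \<longrightarrow>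
            gen_weight (dual_poset le) (dual_code C) s
              = Min {card (ideal_of (dual_poset le) J) | J. card J - code_rank C J \<ge> s}
          \<and> gen_weight (dual_poset le) (dual_code C) s
              = Min {card (ideal_of (dual_poset le) J) | J. card J - code_rank C J = s})"
proof -
  have C: "vec.subspace C" by fact
  have "card J - code_rank (dual_code C) J = vec.dim (supported_subcode C J)" for J
    by (rule card_minus_code_rank_dual_code[OF C])
  moreover have "card J - code_rank C J = vec.dim (supported_subcode (dual_code C) J)" for J
    using card_minus_code_rank_dual_code[OF subspace_dual_code[of C], of J] dual_code_dual_code[OF C]
    by simp
  moreover have "CARD('n) - vec.dim C = vec.dim (dual_code C)" using dim_dual_code[OF C] by simp
  ultimately show ?thesis
    using gen_weight_eq_Min_supported_subcode[OF C]
      gen_weight_eq_Min_supported_subcode[OF subspace_dual_code[of C]]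
    by simp
qed

end
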